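(* Let $\Omega=\{\Omega_1,\dots,\Omega_N\}$ be the vertex set of a directed weighted graph with (not necessarily symmetric) weight function $d$, let $1\le n<N$, and let $r\in\{1,\dots,n\}$. Define, for $t\in\{1,\dots,n\}$, $f(t)=\max\big(MMJ(\Omega_r,\Omega_t~|~\Omega_{[1,n]}),\ d(\Omega_t,\Omega_{n+1})\big)$, and $\mathbb{X}=\{f(t): t\in\{1,\dots,n\}\}$. Then $MMJ(\Omega_r,\Omega_{n+1}~|~\Omega_{[1,n+1]})=\min(\mathbb{X})$.
   Context: $\Omega$ is a finite set of points indexed $\Omega_1,\dots,\Omega_N$, and $\Omega_{[1,n]}=\{\Omega_1,\dots,\Omega_n\}$. $d(x,y)\ge 0$ is the weight of the directed edge from $x$ to $y$ (possibly $d(x,y)\neq d(y,x)$). For a subset $S\subseteq\Omega$, a (directed) path from $i$ to $j$ in $S$ is a finite sequence of points of $S$ (at least two) starting at $i$ and ending at $j$, with no repeated points except that start and end may coincide when $i=j$. A jump of a path is $d(x,y)$ for consecutive points $x$ followed by $y$, and $max\_jump$ of a path is its largest jump. The Min-Max-Jump distance with context $S$ is $MMJ(i,j~|~S)=\min\{max\_jump(\epsilon): \epsilon \text{ a path from } i \text{ to } j \text{ in } S\}$ for $i,j\in S$, with $MMJ(i,i~|~S)=0$. *)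

theory Defs
  imports Complex_Main
begin

definition is_path :: "'a set \<Rightarrow> 'a \<Rightarrow> 'a \<Rightarrow> 'a list \<Rightarrow> bool" where
  "is_path S i j p \<longleftrightarrow> length p \<ge> 2 \<and> hd p = i \<and> last p = j \<and> set p \<subseteq> S \<and>
     (if i = j then distinct (tl p) else distinct p)"

definition max_jump :: "('a \<Rightarrow> 'a \<Rightarrow> real) \<Rightarrow> 'a list \<Rightarrow> real" where
  "max_jump d p = Max (set (map (\<lambda>(x, y). d x y) (zip p (tl p))))"

definition MMJ :: "('a \<Rightarrow> 'a \<Rightarrow> real) \<Rightarrow> 'a set \<Rightarrow> 'a \<Rightarrow> 'a \<Rightarrow> real" where
  "MMJ d S i j = (if i = j then 0 else Min {max_jump d p | p. is_path S i j p})"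

end

theory Submission
  imports Defs
begin

text \<open>An optimal path from \<open>a\<close> to the new point \<open>b\<close> enters \<open>b\<close> by a last jump from some
  \<open>t \<in> S\<close>, and the part before it is a path from \<open>a\<close> to \<open>t\<close> inside \<open>S\<close>; conversely every
  path from \<open>a\<close> to \<open>t\<close> in \<open>S\<close> extends by the jump \<open>d t b\<close> to a path from \<open>a\<close> to \<open>b\<close>.
  Since the max-jump of the extended path is the maximum of the two, minimising over
  both the path and \<open>t\<close> gives the formula.\<close>

lemma is_path_pair: "a \<in> S \<Longrightarrow> b \<in> S \<Longrightarrow> is_path S a b [a, b]"
  unfolding is_path_def by auto

lemma is_path_iff_distinct:
  "a \<noteq> b \<Longrightarrow> is_path S a b p \<longleftrightarrow>
     length p \<ge> 2 \<and> hd p = a \<and> last p = b \<and> set p \<subseteq> S \<and> distinct p"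
  unfolding is_path_def by simp

lemma finite_paths:
  assumes "finite S" shows "finite {p. is_path S i j p}"
proof (rule finite_subset[OF _ finite_lists_length_le[OF assms, of "card S + 1"]])
  show "{p. is_path S i j p} \<subseteq> {xs. set xs \<subseteq> S \<and> length xs \<le> card S + 1}"
  proof safe
    fix p assume p: "is_path S i j p"
    then have sp: "set p \<subseteq> S" and dt: "distinct (tl p)"
      unfolding is_path_def by (auto split: if_splits simp: distinct_tl)
    then show "x \<in> S" if "x \<in> set p" for x using that by blast
    have "length (tl p) = card (set (tl p))" using dt by (simp add: distinct_card)
    also have "\<dots> \<le> card S" using sp assms by (intro card_mono; cases p) auto
    finally show "length p \<le> card S + 1" by simp
  qed
qed

lemma is_path_snocE:
  assumes "is_path S a b p" "a \<noteq> b"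
  obtains q where "p = q @ [b]" "q \<noteq> []" "hd q = a" "distinct q" "b \<notin> set q" "set q \<subseteq> S"
proof -
  have l: "length p \<ge> 2" and hp: "hd p = a" and lp: "last p = b" and sp: "set p \<subseteq> S"
    and dp: "distinct p" using assms by (auto simp: is_path_iff_distinct)
  define q where "q = butlast p"
  have pq: "p = q @ [b]" unfolding q_def using append_butlast_last_id[of p] l lp by fastforce
  have "q \<noteq> []" using l by (simp add: q_def flip: length_greater_0_conv)
  then show thesis using that pq hp sp dp by (simp add: pq)
qed

lemma is_path_hd_last:
  assumes "q \<noteq> []" "hd q = a" "last q \<noteq> a" "distinct q" "set q \<subseteq> S"
  shows "is_path S a (last q) q"
proof -
  have "length q \<ge> 2"
    using assms(1-3) by (cases q rule: remdups_adj.cases) auto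
  then show ?thesis using assms by (simp add: is_path_iff_distinct)
qed

lemma zip_tl_snoc: "p \<noteq> [] \<Longrightarrow> zip (p @ [z]) (tl (p @ [z])) = zip p (tl p) @ [(last p, z)]"
proof (induction p)
  case (Cons x p)
  then show ?case by (cases p) auto
qed simp

lemma max_jump_pair: "max_jump d [a, b] = d a b"
  by (simp add: max_jump_def)

lemma max_jump_snoc_ge: "q \<noteq> [] \<Longrightarrow> d (last q) z \<le> max_jump d (q @ [z])"
  unfolding max_jump_def zip_tl_snoc[of q] by simp

lemma max_jump_snoc:
  assumes "length q \<ge> 2" shows "max_jump d (q @ [z]) = max (max_jump d q) (d (last q) z)"
proof -
  have "q \<noteq> []" "zip q (tl q) \<noteq> []" using assms by (cases q rule: remdups_adj.cases; simp)+
  then show ?thesis unfolding max_jump_def zip_tl_snoc[OF \<open>q \<noteq> []\<close>] by (simp add: max.commute)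
qed

lemma MMJ_le_max_jump:
  assumes "finite S" "i \<noteq> j" "is_path S i j p"
  shows "MMJ d S i j \<le> max_jump d p"
  using assms finite_paths[OF assms(1)] unfolding MMJ_def
  by (auto simp: setcompr_eq_image intro!: Min_le)

lemma MMJ_attained:
  assumes "finite S" "i \<noteq> j" "i \<in> S" "j \<in> S"
  obtains p where "is_path S i j p" "MMJ d S i j = max_jump d p"
proof -
  have "{p. is_path S i j p} \<noteq> {}" using is_path_pair[OF assms(3,4)] by blast
  then have "MMJ d S i j \<in> max_jump d ` {p. is_path S i j p}"
    using finite_paths[OF assms(1)] assms(2) unfolding MMJ_def
    by (simp add: setcompr_eq_image)
  then show thesis using that by blast
qed

context
  fixes S :: "'a set" and d :: "'a \<Rightarrow> 'a \<Rightarrow> real" and a b :: 'a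
  assumes finite: "finite S" and a_in: "a \<in> S" and b_notin: "b \<notin> S"
begin

lemma MMJ_insert_le_last_jump:
  assumes "t \<in> S"
  shows "MMJ d (insert b S) a b \<le> max (MMJ d S a t) (d t b)"
proof -
  have ab: "a \<noteq> b" using a_in b_notin by blast
  show ?thesis
  proof (cases "t = a")
    case True
    have "MMJ d (insert b S) a b \<le> max_jump d [a, b]"
      using a_in ab finite by (intro MMJ_le_max_jump is_path_pair) auto
    then show ?thesis using True by (simp add: max_jump_pair)
  next
    case False
    obtain p where p: "is_path S a t p" "MMJ d S a t = max_jump d p"
      using MMJ_attained[OF finite False[symmetric] a_in assms] .
    then have l: "length p \<ge> 2" and "hd p = a" "last p = t" "set p \<subseteq> S" "distinct p"
      using False by (auto simp: is_path_iff_distinct)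
    then have "is_path (insert b S) a b (p @ [b])"
      using ab b_notin by (auto simp: is_path_iff_distinct hd_append)
    then have "MMJ d (insert b S) a b \<le> max_jump d (p @ [b])"
      using ab finite by (intro MMJ_le_max_jump) auto
    also have "\<dots> = max (MMJ d S a t) (d t b)"
      using max_jump_snoc[OF l] p(2) \<open>last p = t\<close> by simp
    finally show ?thesis .
  qed
qed

text \<open>The candidate \<open>t = a\<close> contributes \<open>max 0 (d a b)\<close>, as \<open>MMJ d S a a = 0\<close> by
  convention; this is why the sign of \<open>d a b\<close> matters.\<close>

lemma MMJ_insert_ge_last_jump:
  assumes "0 \<le> d a b"
  obtains t where "t \<in> S" "max (MMJ d S a t) (d t b) \<le> MMJ d (insert b S) a b"
proof -
  have ab: "a \<noteq> b" using a_in b_notin by blast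
  obtain p where p: "is_path (insert b S) a b p" "MMJ d (insert b S) a b = max_jump d p"
    using MMJ_attained[OF _ ab] finite a_in by blast
  obtain q where pq: "p = q @ [b]" and q: "q \<noteq> []" "hd q = a" "distinct q" "b \<notin> set q"
    "set q \<subseteq> insert b S"
    using is_path_snocE[OF p(1) ab] .
  have q_in: "set q \<subseteq> S" using q(4,5) by blast
  define t where "t = last q"
  have t_in: "t \<in> S" using q(1) q_in unfolding t_def by auto
  have last_jump: "d t b \<le> MMJ d (insert b S) a b"
    using max_jump_snoc_ge[OF q(1)] pq p(2) unfolding t_def by simp
  show thesis
  proof (cases "t = a")
    case True
    then show thesis using that t_in last_jump assms by (simp add: MMJ_def)
  next
    case False
    have q_path: "is_path S a t q"
      using is_path_hd_last[OF q(1,2) _ q(3) q_in] False unfolding t_def by simp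
    then have lq: "length q \<ge> 2" by (simp add: is_path_def)
    have "MMJ d S a t \<le> max_jump d q"
      using False finite q_path by (intro MMJ_le_max_jump) auto
    moreover have "max_jump d p = max (max_jump d q) (d t b)"
      using max_jump_snoc[OF lq] pq unfolding t_def by simp
    ultimately show thesis using that t_in p(2) by simp
  qed
qed

lemma MMJ_insert_eq_Min_last_jump:
  assumes "0 \<le> d a b"
  shows "MMJ d (insert b S) a b = (MIN t\<in>S. max (MMJ d S a t) (d t b))"
proof (rule antisym)
  show "MMJ d (insert b S) a b \<le> (MIN t\<in>S. max (MMJ d S a t) (d t b))"
    using finite a_in MMJ_insert_le_last_jump by (subst Min_ge_iff) auto
  obtain t where "t \<in> S" "max (MMJ d S a t) (d t b) \<le> MMJ d (insert b S) a b"
    using MMJ_insert_ge_last_jump[OF assms] .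
  then show "(MIN t\<in>S. max (MMJ d S a t) (d t b)) \<le> MMJ d (insert b S) a b"
    using finite by (meson Min_le finite_imageI image_eqI order_trans)
qed

end

theorem theorem6p1:
  fixes \<Omega> :: "nat \<Rightarrow> 'a" and d :: "'a \<Rightarrow> 'a \<Rightarrow> real" and N n r :: nat
  assumes "inj_on \<Omega> {1..N}"
    and "\<forall>x\<in>\<Omega> ` {1..N}. \<forall>y\<in>\<Omega> ` {1..N}. d x y \<ge> 0"
    and "1 \<le> n" and "n < N" and "r \<in> {1..n}"
  shows "MMJ d (\<Omega> ` {1..n+1}) (\<Omega> r) (\<Omega> (n+1)) =
         Min {max (MMJ d (\<Omega> ` {1..n}) (\<Omega> r) (\<Omega> t)) (d (\<Omega> t) (\<Omega> (n+1))) | t. t \<in> {1..n}}"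
proof -
  have new_point: "\<Omega> (n+1) \<notin> \<Omega> ` {1..n}"
    using assms(1,4) by (auto simp: inj_on_eq_iff)
  have "0 \<le> d (\<Omega> r) (\<Omega> (n+1))"
    using assms(2,4,5) by auto
  moreover have "\<Omega> ` {1..n+1} = insert (\<Omega> (n+1)) (\<Omega> ` {1..n})"
    by (simp add: atLeastAtMostSuc_conv)
  moreover have "{max (MMJ d (\<Omega> ` {1..n}) (\<Omega> r) (\<Omega> t)) (d (\<Omega> t) (\<Omega> (n+1))) | t. t \<in> {1..n}}
      = (\<lambda>x. max (MMJ d (\<Omega> ` {1..n}) (\<Omega> r) x) (d x (\<Omega> (n+1)))) ` \<Omega> ` {1..n}"
    by blast
  ultimately show ?thesis
    using MMJ_insert_eq_Min_last_jump[of "\<Omega> ` {1..n}" "\<Omega> r" "\<Omega> (n+1)" d] new_point assms(5)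
    by simp
qed

end
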